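(* Consider the setting described in the context and suppose the stepsizes satisfy conditions (A) and (B), and either (C1) or (C2). Then the PDHG method converges in the residuals: $$\lim_{k\to\infty}\|P_k\|^2+\|D_k\|^2=0,$$ where $P_{k+1}=\frac{1}{\tau_k}(x_k-x_{k+1})-A^T(y_k-y_{k+1})$ and $D_{k+1}=\frac{1}{\sigma_k}(y_k-y_{k+1})-A(x_k-x_{k+1})$.
   Context: Let $A\in\mathbb{R}^{M\times N}$, let $f$ and $g$ be convex functions on $\mathbb{R}^N$ and $\mathbb{R}^M$, and let $X\subset\mathbb{R}^N$, $Y\subset\mathbb{R}^M$ be convex sets; consider the saddle-point problem $\min_{x\in X}\max_{y\in Y} f(x)+y^TAx-g(y)$. Let $\chi_C$ denote the characteristic function of a set $C$ ($0$ on $C$, $+\infty$ off $C$), and let $F=\partial(f+\chi_X)$, $G=\partial(g+\chi_Y)$. It is assumed that the problem is feasible (there is $u^\star=(x^\star,y^\star)$ with $0\in F(x^\star)+A^Ty^\star$, $0\in G(y^\star)-Ax^\star$) and that the minimizations below have solutions. The PDHG method with stepsizes $\tau_k,\sigma_k>0$ starts from $x_0,y_0$ and iterates $x_{k+1}=\arg\min_{x\in X} f(x)+\frac{1}{2\tau_k}\|x-(x_k-\tau_kA^Ty_k)\|^2$, $y_{k+1}=\arg\min_{y\in Y} g(y)+\frac{1}{2\sigma_k}\|y-(y_k+\sigma_kA(2x_{k+1}-x_k))\|^2$. (One has $P_{k+1}\in F(x_{k+1})+A^Ty_{k+1}$ and $D_{k+1}\in G(y_{k+1})-Ax_{k+1}$.)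 Write $u_k=(x_k,y_k)$, $M_k=\begin{pmatrix}\tau_k^{-1}I & -A^T\\ -A & \sigma_k^{-1}I\end{pmatrix}$, $H_k=\begin{pmatrix}\tau_k^{-1}I & 0\\ 0 & \sigma_k^{-1}I\end{pmatrix}$, and for a symmetric (possibly indefinite) matrix $M$, $\|u\|_M^2:=u^TMu$. Let $\phi_k=\max\{(\tau_k-\tau_{k+1})/\tau_k,\ (\sigma_k-\sigma_{k+1})/\sigma_k,\ 0\}$. Conditions: (A) the sequences $\{\tau_k\}$ and $\{\sigma_k\}$ are bounded; (B) $\sum_{k\ge0}\phi_k<C_\phi<\infty$ for some constant $C_\phi$; (C1) there is a constant $L$ with $\tau_k\sigma_k<L<\rho(A^TA)^{-1}$ for all $k>0$ ($\rho$ = spectral radius); (C2) either $X$ or $Y$ is bounded and there is $c\in(0,1)$ with $\|u_{k+1}-u_k\|_{M_k}^2\ge c\|u_{k+1}-u_k\|_{H_k}^2$ for all $k>0$. *)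

theory Defs
  imports "HOL-Analysis.Analysis"
begin

text \<open>Subdifferential of f + chi_C at x (chi_C the characteristic function of C):
  empty off C; on C the set of v with f z >= f x + v.(z - x) for all z in C.\<close>
definition subdiff_on :: "('a::real_inner \<Rightarrow> real) \<Rightarrow> 'a set \<Rightarrow> 'a \<Rightarrow> 'a set" where
  "subdiff_on f C x = {v. x \<in> C \<and> (\<forall>z\<in>C. f x + inner v (z - x) \<le> f z)}"

definition cplx_eigenvalue :: "real^'n^'n \<Rightarrow> complex \<Rightarrow> bool" where
  "cplx_eigenvalue B c \<longleftrightarrow>
     (\<exists>v::complex^'n. v \<noteq> 0 \<and> (\<chi> i j. complex_of_real (B $ i $ j)) *v v = c *s v)"

definition spec_radius :: "real^'n^'n \<Rightarrow> real" where
  "spec_radius B = Max {cmod c | c. cplx_eigenvalue B c}"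

definition M_quad :: "real \<Rightarrow> real \<Rightarrow> real^'n^'m \<Rightarrow> real^'n \<Rightarrow> real^'m \<Rightarrow> real" where
  "M_quad t s A dx dy =
     inner dx dx / t - inner dx (transpose A *v dy) - inner dy (A *v dx) + inner dy dy / s"

definition H_quad :: "real \<Rightarrow> real \<Rightarrow> real^'n \<Rightarrow> real^'m \<Rightarrow> real" where
  "H_quad t s dx dy = inner dx dx / t + inner dy dy / s"

end

theory Submission
  imports Defs "HOL-Computational_Algebra.Polynomial"
begin

text \<open>
  Fix a saddle point \<open>u* = (xs, ys)\<close>. Testing the optimality conditions of the two proximal
  steps against the subgradients at \<open>u*\<close> gives the Fejer-type inequality
  \<open>\<parallel>u\<^sub>k\<^sub>+\<^sub>1 - u*\<parallel>\<^sup>2\<^sub>M\<^sub>k + \<parallel>u\<^sub>k\<^sub>+\<^sub>1 - u\<^sub>k\<parallel>\<^sup>2\<^sub>M\<^sub>k \<le> \<parallel>u\<^sub>k - u*\<parallel>\<^sup>2\<^sub>M\<^sub>k\<close>.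
  By (B) the stepsizes are bounded below by some \<open>m > 0\<close>, so passing from the metric \<open>M\<^sub>k\<close> to
  \<open>M\<^sub>k\<^sub>+\<^sub>1\<close> costs at most \<open>\<phi>\<^sub>k / m\<close> times \<open>\<parallel>u\<^sub>k\<^sub>+\<^sub>1 - u*\<parallel>\<^sup>2\<close>. Under (C1) the bound
  \<open>\<parallel>A u\<parallel>\<^sup>2 \<le> \<rho>(A\<^sup>T A) \<parallel>u\<parallel>\<^sup>2\<close> makes \<open>M\<^sub>k\<close> uniformly equivalent to \<open>H\<^sub>k\<close>; under (C2) the bounded
  block of the error keeps the \<open>M\<^sub>k\<close>-energy of the error bounded below and coercive. Either way
  this drift is summable relative to the energy, and a deterministic Robbins-Siegmund argument
  makes \<open>\<Sum>\<^sub>k \<parallel>u\<^sub>k\<^sub>+\<^sub>1 - u\<^sub>k\<parallel>\<^sup>2\<^sub>M\<^sub>k\<close> finite. Hence the increments are square summable, and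
  so are the residuals \<open>P\<^sub>k, D\<^sub>k\<close>, which are bounded by them.
\<close>

section \<open>Spectral radius of $A^T A$\<close>

definition of_real_matrix :: "real^'n^'m \<Rightarrow> complex^'n^'m" where
  "of_real_matrix B = (\<chi> i j. complex_of_real (B $ i $ j))"

lemma mat_mult_vector: "mat c *v v = c *s (v :: 'a::comm_ring_1^'n)"
  unfolding vec_eq_iff matrix_vector_mult_def mat_def
  by (simp add: if_distrib [where f = "\<lambda>a. a * _"] cong: if_cong)

lemma cplx_eigenvalue_iff_det:
  "cplx_eigenvalue B c \<longleftrightarrow> det (of_real_matrix B - mat c) = 0"
proof -
  have "det (of_real_matrix B - mat c) \<noteq> 0 \<longleftrightarrow>
      (\<forall>v. (of_real_matrix B - mat c) *v v = 0 \<longrightarrow> v = 0)"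
    using invertible_det_nz invertible_left_inverse matrix_left_invertible_ker by metis
  then show ?thesis
    by (auto simp: cplx_eigenvalue_def of_real_matrix_def[symmetric] matrix_vector_mult_diff_rdistrib mat_mult_vector)
qed

definition charpoly :: "complex^'n^'n \<Rightarrow> complex poly" where
  "charpoly M = (\<Sum>p\<in>{p. p permutes (UNIV::'n set)}. smult (of_int (sign p))
      (\<Prod>i\<in>UNIV. [:M $ i $ p i, if p i = i then -1 else 0:]))"

lemma poly_charpoly: "poly (charpoly M) c = det (M - mat c)"
  unfolding charpoly_def det_def poly_sum poly_prod
  by (rule sum.cong) (auto intro!: prod.cong simp: poly_prod mat_def)

lemma cmod_le_sum_abs_if_cplx_eigenvalue:
  fixes B :: "real^'n^'n"
  assumes "cplx_eigenvalue B c"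
  shows "cmod c \<le> (\<Sum>i\<in>UNIV. \<Sum>j\<in>UNIV. \<bar>B $ i $ j\<bar>)"
proof -
  obtain v :: "complex^'n" where "v \<noteq> 0" and ev: "of_real_matrix B *v v = c *s v"
    using assms unfolding cplx_eigenvalue_def of_real_matrix_def by blast
  define m where "m = Max (range (\<lambda>j. cmod (v $ j)))"
  have m_ge: "cmod (v $ j) \<le> m" for j
    unfolding m_def by (rule Max_ge) auto
  have "m \<in> range (\<lambda>j. cmod (v $ j))"
    unfolding m_def by (rule Max_in) auto
  then obtain i where m_eq: "m = cmod (v $ i)"
    by blast
  have "m > 0"
  proof (rule ccontr)
    assume "\<not> m > 0"
    then have "v $ j = 0" for j
      using m_ge[of j] by (metis norm_le_zero_iff order_trans not_less)
    with \<open>v \<noteq> 0\<close> show False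
      by (simp add: vec_eq_iff)
  qed
  have "cmod c * m = cmod (\<Sum>j\<in>UNIV. complex_of_real (B $ i $ j) * v $ j)"
    using arg_cong[OF ev, of "\<lambda>w. cmod (w $ i)"] m_eq
    by (simp add: matrix_vector_mult_def of_real_matrix_def norm_mult)
  also have "\<dots> \<le> (\<Sum>j\<in>UNIV. \<bar>B $ i $ j\<bar> * m)"
    by (rule order_trans[OF norm_sum sum_mono]) (simp add: norm_mult m_ge mult_left_mono)
  also have "\<dots> \<le> (\<Sum>i\<in>UNIV. \<Sum>j\<in>UNIV. \<bar>B $ i $ j\<bar>) * m"
    unfolding sum_distrib_right[symmetric] using \<open>m > 0\<close>
    by (intro mult_right_mono member_le_sum) (auto intro: sum_nonneg)
  finally show ?thesis
    using \<open>m > 0\<close> by simp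
qed

lemma finite_cplx_eigenvalues: "finite {c. cplx_eigenvalue B c}"
proof -
  define S where "S = (\<Sum>i\<in>UNIV. \<Sum>j\<in>UNIV. \<bar>B $ i $ j\<bar>)"
  have "\<not> cplx_eigenvalue B (complex_of_real (S + 1))"
  proof
    assume "cplx_eigenvalue B (complex_of_real (S + 1))"
    then have "cmod (complex_of_real (S + 1)) \<le> S"
      unfolding S_def by (rule cmod_le_sum_abs_if_cplx_eigenvalue)
    then have "\<bar>S + 1\<bar> \<le> S"
      by (simp only: norm_of_real)
    then show False
      by simp
  qed
  then have "poly (charpoly (of_real_matrix B)) (complex_of_real (S + 1)) \<noteq> 0"
    by (simp add: cplx_eigenvalue_iff_det poly_charpoly)
  then have "charpoly (of_real_matrix B) \<noteq> 0"
    by auto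
  then have "finite {c. poly (charpoly (of_real_matrix B)) c = 0}"
    by (rule poly_roots_finite)
  then show ?thesis
    by (simp add: cplx_eigenvalue_iff_det poly_charpoly)
qed

lemma abs_real_eigenvalue_le_spec_radius:
  fixes B :: "real^'n^'n"
  assumes "v \<noteq> 0" and "B *v v = l *\<^sub>R v"
  shows "\<bar>l\<bar> \<le> spec_radius B"
proof -
  define w :: "complex^'n" where "w = (\<chi> i. complex_of_real (v $ i))"
  have "w \<noteq> 0"
    using assms(1) by (auto simp: w_def vec_eq_iff)
  moreover have "of_real_matrix B *v w = complex_of_real l *s w"
  proof -
    have "(\<Sum>j\<in>UNIV. B $ i $ j * v $ j) = l * v $ i" for i
      using arg_cong[OF assms(2), of "\<lambda>u. u $ i"] by (simp add: matrix_vector_mult_def)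
    then show ?thesis
      by (simp add: vec_eq_iff matrix_vector_mult_def w_def of_real_matrix_def flip: of_real_mult of_real_sum)
  qed
  ultimately have "cplx_eigenvalue B (complex_of_real l)"
    unfolding cplx_eigenvalue_def of_real_matrix_def by blast
  moreover have "finite {cmod c | c. cplx_eigenvalue B c}"
    using finite_cplx_eigenvalues[of B] by (simp add: setcompr_eq_image)
  ultimately show ?thesis
    unfolding spec_radius_def by (metis (mono_tags, lifting) Max_ge mem_Collect_eq norm_of_real)
qed

lemma linear_le_quadratic_imp_zero:
  fixes d K :: real
  assumes "\<And>t. 2 * t * d \<le> t\<^sup>2 * K"
  shows "d = 0"
proof -
  define K' where "K' = \<bar>K\<bar> + 1"
  have "K' > 0"
    unfolding K'_def by simp
  have "2 * t * d \<le> t\<^sup>2 * K'" for t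
  proof -
    have "t\<^sup>2 * K \<le> t\<^sup>2 * K'"
      unfolding K'_def by (intro mult_left_mono) auto
    then show ?thesis
      using assms[of t] by linarith
  qed
  from this[of "d / K'"] have "2 * d\<^sup>2 / K' \<le> d\<^sup>2 / K'"
    using \<open>K' > 0\<close> by (simp add: power2_eq_square)
  then show ?thesis
    using \<open>K' > 0\<close> by (simp add: divide_le_cancel)
qed

lemma rayleigh_maximizer_is_eigenvector:
  fixes A :: "real^'n^'m"
  assumes max: "\<And>w. (norm (A *v w))\<^sup>2 \<le> l * (norm w)\<^sup>2" and v: "norm v = 1" "(norm (A *v v))\<^sup>2 = l"
  shows "(transpose A ** A) *v v = l *\<^sub>R v"
proof -
  have "inner v v = 1"
    using v(1) by (simp flip: power2_norm_eq_inner)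
  have "inner (A *v v) (A *v w) - l * inner v w = 0" for w
  proof (rule linear_le_quadratic_imp_zero)
    fix t
    have "(norm (A *v v + t *\<^sub>R (A *v w)))\<^sup>2 \<le> l * (norm (v + t *\<^sub>R w))\<^sup>2"
      using max[of "v + t *\<^sub>R w"] by (simp add: matrix_vector_right_distrib matrix_vector_mult_scaleR)
    then show "2 * t * (inner (A *v v) (A *v w) - l * inner v w) \<le> t\<^sup>2 * (l * (norm w)\<^sup>2 - (norm (A *v w))\<^sup>2)"
      using v(2) \<open>inner v v = 1\<close> unfolding power2_norm_eq_inner
      by (simp add: inner_add_left inner_add_right inner_commute algebra_simps power2_eq_square)
  qed
  then have "inner ((transpose A ** A) *v v - l *\<^sub>R v) w = 0" for w
    by (simp add: inner_diff_left dot_lmul_matrix flip: matrix_vector_mul_assoc)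
  then show ?thesis
    by (metis eq_iff_diff_eq_0 inner_eq_zero_iff)
qed

lemma norm_matrix_vector_sq_le_spec_radius:
  fixes A :: "real^'n^'m"
  shows "(norm (A *v u))\<^sup>2 \<le> spec_radius (transpose A ** A) * (norm u)\<^sup>2"
proof -
  have "axis undefined 1 \<in> sphere (0::real^'n) 1"
    by simp
  then have "\<exists>v\<in>sphere 0 1. \<forall>w\<in>sphere 0 1. (norm (A *v w))\<^sup>2 \<le> (norm (A *v v))\<^sup>2"
    by (intro continuous_attains_sup compact_sphere continuous_intros linear_continuous_on
        matrix_vector_mult_linear_continuous_on) blast
  then obtain v where v: "norm v = 1" and v_max: "\<And>w. norm w = 1 \<Longrightarrow> (norm (A *v w))\<^sup>2 \<le> (norm (A *v v))\<^sup>2"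
    by auto
  define l where "l = (norm (A *v v))\<^sup>2"
  have l_max: "(norm (A *v w))\<^sup>2 \<le> l * (norm w)\<^sup>2" for w
  proof (cases "w = 0")
    case False
    then show ?thesis
      using v_max[of "(1 / norm w) *\<^sub>R w"] unfolding l_def
      by (simp add: matrix_vector_mult_scaleR power_divide divide_le_eq)
  qed simp
  have "(transpose A ** A) *v v = l *\<^sub>R v"
    using rayleigh_maximizer_is_eigenvector[OF l_max v] l_def by simp
  then have "l \<le> spec_radius (transpose A ** A)"
    using abs_real_eigenvalue_le_spec_radius[of v] v by fastforce
  then show ?thesis
    using l_max[of u] by (meson order_trans mult_right_mono zero_le_power2)
qed

lemma spec_radius_transpose_mult_nonneg: "0 \<le> spec_radius (transpose A ** (A::real^'n^'m))"
proof -
  have "(norm (A *v axis undefined 1))\<^sup>2 \<le> spec_radius (transpose A ** A)"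
    using norm_matrix_vector_sq_le_spec_radius[of A "axis undefined 1"] by simp
  then show ?thesis
    by (rule order_trans[OF zero_le_power2])
qed

section \<open>The quadratic forms $M_k$ and $H_k$\<close>

lemma inner_transpose_matrix_vector: "inner u (transpose A *v v) = inner ((A::real^'n^'m) *v u) v"
  using dot_lmul_matrix[of v A u] by (simp add: inner_commute)

lemma matrix_transpose_norm_bound:
  fixes A :: "real^'n^'m"
  obtains N where "\<And>w. norm (A *v w) \<le> N * norm w" "\<And>w. norm (transpose A *v w) \<le> N * norm w"
proof -
  obtain N1 N2 where "\<And>w. norm (A *v w) \<le> norm w * N1" "\<And>w. norm (transpose A *v w) \<le> norm w * N2"
    using bounded_linear.bounded[OF matrix_vector_mul_bounded_linear] by metis
  then have "norm (A *v w) \<le> max N1 N2 * norm w" "norm (transpose A *v w') \<le> max N1 N2 * norm w'" for w w'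
    by (smt (verit, best) mult.commute mult_right_mono norm_ge_zero)+
  then show ?thesis
    using that by blast
qed

lemma inner_matrix_vector_le:
  fixes A :: "real^'n^'m"
  assumes "\<And>w. norm (A *v w) \<le> N * norm w"
  shows "\<bar>inner (A *v u) v\<bar> \<le> N * norm u * norm v"
  using order_trans[OF Cauchy_Schwarz_ineq2 mult_right_mono[OF assms norm_ge_zero]] .

lemma M_quad_eq:
  fixes A :: "real^'n^'m"
  shows "M_quad t s A u v = (norm u)\<^sup>2 / t - 2 * inner (A *v u) v + (norm v)\<^sup>2 / s"
  unfolding M_quad_def power2_norm_eq_inner inner_transpose_matrix_vector by (simp add: inner_commute)

lemma H_quad_eq: "H_quad t s u v = (norm u)\<^sup>2 / t + (norm v)\<^sup>2 / s"
  by (simp add: H_quad_def power2_norm_eq_inner)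

lemma M_quad_transpose: "M_quad t s (A::real^'n^'m) u v = M_quad s t (transpose A) v u"
  using inner_transpose_matrix_vector[of u A v] by (simp add: M_quad_eq inner_commute)

lemma H_quad_nonneg: "0 < t \<Longrightarrow> 0 < s \<Longrightarrow> 0 \<le> H_quad t s u v"
  by (simp add: H_quad_eq)

lemma norms_sq_le_H_quad:
  assumes "0 < t" "0 < s" "t \<le> T" "s \<le> T"
  shows "(norm u)\<^sup>2 + (norm v)\<^sup>2 \<le> T * H_quad t s u v"
proof -
  have "(norm u)\<^sup>2 = t * ((norm u)\<^sup>2 / t)" "(norm v)\<^sup>2 = s * ((norm v)\<^sup>2 / s)"
    using assms by simp_all
  moreover have "t * ((norm u)\<^sup>2 / t) \<le> T * ((norm u)\<^sup>2 / t)" "s * ((norm v)\<^sup>2 / s) \<le> T * ((norm v)\<^sup>2 / s)"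
    using assms by (intro mult_right_mono; simp)+
  ultimately show ?thesis
    by (simp add: H_quad_eq distrib_left)
qed

lemma M_quad_change_stepsizes:
  fixes A :: "real^'n^'m"
  assumes "1 / t' - 1 / t \<le> \<psi>" "1 / s' - 1 / s \<le> \<psi>"
  shows "M_quad t' s' A u v \<le> M_quad t s A u v + \<psi> * ((norm u)\<^sup>2 + (norm v)\<^sup>2)"
proof -
  have "M_quad t' s' A u v - M_quad t s A u v
      = (norm u)\<^sup>2 * (1 / t' - 1 / t) + (norm v)\<^sup>2 * (1 / s' - 1 / s)"
    by (simp add: M_quad_eq algebra_simps)
  also have "\<dots> \<le> (norm u)\<^sup>2 * \<psi> + (norm v)\<^sup>2 * \<psi>"
    using assms by (intro add_mono mult_left_mono) auto
  finally show ?thesis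
    by (simp add: algebra_simps)
qed

text \<open>The hypotheses are the monotonicity inequalities of the primal and the dual proximal step,
  for the errors \<open>a0, b0\<close> before and \<open>a, b\<close> after the step.\<close>

lemma M_quad_descent:
  fixes A :: "real^'n^'m"
  assumes "0 \<le> inner ((1 / t) *\<^sub>R (a0 - a) - transpose A *v b0) a"
    and "0 \<le> inner ((1 / s) *\<^sub>R (b0 - b) + A *v (2 *\<^sub>R a - a0)) b"
  shows "M_quad t s A a b + M_quad t s A (a - a0) (b - b0) \<le> M_quad t s A a0 b0"
proof -
  have "M_quad t s A a0 b0 - M_quad t s A a b - M_quad t s A (a - a0) (b - b0)
      = 2 * (inner ((1 / t) *\<^sub>R (a0 - a) - transpose A *v b0) a
           + inner ((1 / s) *\<^sub>R (b0 - b) + A *v (2 *\<^sub>R a - a0)) b)" (is "_ = 2 * ?gap")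
    unfolding M_quad_eq power2_norm_eq_inner
    using inner_transpose_matrix_vector[of a A b0]
    by (simp add: matrix_vector_mult_diff_distrib
        matrix_vector_mult_scaleR inner_diff_left inner_diff_right inner_add_left inner_commute
        diff_divide_distrib add_divide_distrib algebra_simps)
  moreover have "0 \<le> ?gap"
    using assms by simp
  ultimately show ?thesis
    by (smt (verit))
qed

lemma M_quad_ge_H_quad:
  fixes A :: "real^'n^'m"
  assumes "0 < t" "0 < s" "0 \<le> N" "\<And>w. norm (A *v w) \<le> N * norm w"
  shows "(1 - N * sqrt (t * s)) * H_quad t s u v \<le> M_quad t s A u v"
proof -
  define a where "a = norm u / sqrt t"
  define b where "b = norm v / sqrt s"
  have "2 * a * b \<le> a\<^sup>2 + b\<^sup>2"
    using sum_squares_bound[of a b] by simp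
  then have "sqrt (t * s) * (2 * a * b) \<le> sqrt (t * s) * (a\<^sup>2 + b\<^sup>2)"
    using assms by (simp add: mult_left_mono)
  moreover have "sqrt (t * s) * (2 * a * b) = 2 * norm u * norm v"
    using assms by (simp add: a_def b_def real_sqrt_mult)
  moreover have "a\<^sup>2 + b\<^sup>2 = H_quad t s u v"
    using assms by (simp add: a_def b_def H_quad_eq power_divide)
  ultimately have "N * (2 * norm u * norm v) \<le> N * sqrt (t * s) * H_quad t s u v"
    using assms(3) by (metis mult.assoc mult_left_mono)
  then have "2 * inner (A *v u) v \<le> N * sqrt (t * s) * H_quad t s u v"
    using inner_matrix_vector_le[OF assms(4), of u v] by linarith
  moreover have "M_quad t s A u v = H_quad t s u v - 2 * inner (A *v u) v"
    by (simp add: M_quad_eq H_quad_eq)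
  ultimately show ?thesis
    by (simp add: left_diff_distrib)
qed

lemma M_quad_ge_H_quad_if_stepsize_product_lt:
  fixes A :: "real^'n^'m"
  assumes "0 < t" "0 < s" "t * s < L" "L * spec_radius (transpose A ** A) < 1"
  shows "(1 - sqrt (L * spec_radius (transpose A ** A))) * H_quad t s u v \<le> M_quad t s A u v"
proof -
  define r where "r = spec_radius (transpose A ** A)"
  have "0 \<le> r"
    unfolding r_def by (rule spec_radius_transpose_mult_nonneg)
  have "norm (A *v w) \<le> sqrt r * norm w" for w
  proof (rule power2_le_imp_le)
    show "(norm (A *v w))\<^sup>2 \<le> (sqrt r * norm w)\<^sup>2"
      using norm_matrix_vector_sq_le_spec_radius[of A w] \<open>0 \<le> r\<close> by (simp add: r_def power_mult_distrib)
  qed (simp add: \<open>0 \<le> r\<close>)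
  then have "(1 - sqrt r * sqrt (t * s)) * H_quad t s u v \<le> M_quad t s A u v"
    using assms \<open>0 \<le> r\<close> by (intro M_quad_ge_H_quad) auto
  moreover have "r * (t * s) \<le> r * L"
    using assms(3) \<open>0 \<le> r\<close> by (simp add: mult_left_mono)
  then have "(1 - sqrt (L * r)) * H_quad t s u v \<le> (1 - sqrt r * sqrt (t * s)) * H_quad t s u v"
    using H_quad_nonneg[OF assms(1,2)] by (intro mult_right_mono) (simp_all add: mult.commute flip: real_sqrt_mult)
  ultimately show ?thesis
    unfolding r_def by linarith
qed

lemma M_quad_bounds_if_norm_le:
  fixes A :: "real^'n^'m"
  assumes "0 < t" "0 < s" "s \<le> T" "\<And>w. norm (A *v w) \<le> N * norm w" "norm u \<le> R"
  shows "- (2 * T * N\<^sup>2 * R\<^sup>2) \<le> M_quad t s A u v"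
    and "(norm u)\<^sup>2 + (norm v)\<^sup>2 \<le> 2 * T * (M_quad t s A u v + 2 * T * N\<^sup>2 * R\<^sup>2) + R\<^sup>2"
proof -
  have "2 * N * norm u * norm v \<le> (norm v)\<^sup>2 / (2 * s) + 2 * s * N\<^sup>2 * (norm u)\<^sup>2"
  proof -
    have "4 * s * N * norm u * norm v \<le> (norm v)\<^sup>2 + 4 * s\<^sup>2 * N\<^sup>2 * (norm u)\<^sup>2"
      using zero_le_power2[of "norm v - 2 * s * N * norm u"]
      by (simp add: power2_eq_square algebra_simps)
    then show ?thesis
      using assms(2) by (simp add: field_simps power2_eq_square)
  qed
  moreover have "2 * s * N\<^sup>2 * (norm u)\<^sup>2 \<le> 2 * T * N\<^sup>2 * R\<^sup>2"
  proof -
    have "(norm u)\<^sup>2 \<le> R\<^sup>2"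
      using assms(5) by (simp add: power_mono)
    then show ?thesis
      using assms(2,3) by (intro mult_mono) auto
  qed
  ultimately have lower: "(norm u)\<^sup>2 / t + (norm v)\<^sup>2 / (2 * s) - 2 * T * N\<^sup>2 * R\<^sup>2 \<le> M_quad t s A u v"
    using inner_matrix_vector_le[OF assms(4), of u v] by (simp add: M_quad_eq field_simps)
  moreover have "0 \<le> (norm u)\<^sup>2 / t" "0 \<le> (norm v)\<^sup>2 / (2 * s)"
    using assms by simp_all
  ultimately show "- (2 * T * N\<^sup>2 * R\<^sup>2) \<le> M_quad t s A u v"
    by linarith
  have "(norm v)\<^sup>2 = 2 * s * ((norm v)\<^sup>2 / (2 * s))"
    using assms by simp
  also have "\<dots> \<le> 2 * T * (M_quad t s A u v + 2 * T * N\<^sup>2 * R\<^sup>2)"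
    using lower \<open>0 \<le> (norm u)\<^sup>2 / t\<close> \<open>0 \<le> (norm v)\<^sup>2 / (2 * s)\<close> assms(2,3)
    by (intro mult_mono) auto
  moreover have "(norm u)\<^sup>2 \<le> R\<^sup>2"
    using assms(5) by (simp add: power_mono)
  ultimately show "(norm u)\<^sup>2 + (norm v)\<^sup>2 \<le> 2 * T * (M_quad t s A u v + 2 * T * N\<^sup>2 * R\<^sup>2) + R\<^sup>2"
    by linarith
qed

lemma M_quad_bounds_if_one_norm_le:
  fixes A :: "real^'n^'m"
  assumes "0 < t" "0 < s" "t \<le> T" "s \<le> T"
    and "\<And>w. norm (A *v w) \<le> N * norm w" "\<And>w. norm (transpose A *v w) \<le> N * norm w"
    and "norm u \<le> R \<or> norm v \<le> R"
  shows "- (2 * T * N\<^sup>2 * R\<^sup>2) \<le> M_quad t s A u v \<and>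
    (norm u)\<^sup>2 + (norm v)\<^sup>2 \<le> 2 * T * (M_quad t s A u v + 2 * T * N\<^sup>2 * R\<^sup>2) + R\<^sup>2"
  using assms(7)
proof
  assume "norm u \<le> R"
  then show ?thesis
    using M_quad_bounds_if_norm_le[OF assms(1,2,4,5)] by auto
next
  assume "norm v \<le> R"
  then show ?thesis
    using M_quad_bounds_if_norm_le[OF assms(2,1,3,6), of v R u] M_quad_transpose[of t s A u v]
    by (simp add: add.commute)
qed

lemma residual_sq_le:
  fixes B :: "real^'n^'m"
  assumes "0 < m" "m \<le> t" "\<And>w. norm (B *v w) \<le> N * norm w"
  shows "(norm ((1 / t) *\<^sub>R u - B *v v))\<^sup>2 \<le> 2 * (norm u)\<^sup>2 / m\<^sup>2 + 2 * N\<^sup>2 * (norm v)\<^sup>2"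
proof -
  have "norm ((1 / t) *\<^sub>R u) \<le> norm u / m"
    using assms(1,2) by (simp add: divide_left_mono)
  moreover have "\<bar>N * norm v\<bar> \<ge> norm (B *v v)"
    using assms(3)[of v] by linarith
  ultimately have "(norm ((1 / t) *\<^sub>R u - B *v v))\<^sup>2 \<le> (norm u / m + \<bar>N * norm v\<bar>)\<^sup>2"
    by (intro power_mono order_trans[OF norm_triangle_ineq4] add_mono) auto
  also have "\<dots> \<le> 2 * (norm u / m)\<^sup>2 + 2 * \<bar>N * norm v\<bar>\<^sup>2"
    using sum_squares_bound[of "norm u / m" "\<bar>N * norm v\<bar>"] by (simp add: power2_sum)
  finally show ?thesis
    by (simp add: power_divide power_mult_distrib)
qed

section \<open>Proximal steps\<close>

lemma nonpos_if_le_small_multiples: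
  fixes g K :: real
  assumes "0 \<le> K" and "\<And>t. 0 < t \<Longrightarrow> t \<le> 1 \<Longrightarrow> g \<le> t * K"
  shows "g \<le> 0"
proof (rule field_le_epsilon)
  fix e :: real
  assume "0 < e"
  define t where "t = min 1 (e / (K + 1))"
  have "0 < t" "t \<le> 1"
    using \<open>0 < e\<close> assms(1) by (auto simp: t_def)
  have "t * K \<le> e / (K + 1) * K"
    using assms(1) by (intro mult_right_mono) (auto simp: t_def)
  also have "\<dots> \<le> e"
    using \<open>0 < e\<close> assms(1) by (simp add: field_simps)
  finally show "g \<le> 0 + e"
    using assms(2)[OF \<open>0 < t\<close> \<open>t \<le> 1\<close>] by simp
qed

lemma prox_variational_inequality:
  fixes f :: "'a::real_inner \<Rightarrow> real"
  assumes "convex_on UNIV f" "convex X" "p \<in> X" "0 < \<tau>"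
    and prox: "\<forall>z\<in>X. f p + (norm (p - c))\<^sup>2 / (2 * \<tau>) \<le> f z + (norm (z - c))\<^sup>2 / (2 * \<tau>)"
    and "z \<in> X"
  shows "f p + inner ((1 / \<tau>) *\<^sub>R (c - p)) (z - p) \<le> f z"
proof -
  define d where "d = z - p"
  have "f p - f z - inner (p - c) d / \<tau> \<le> 0"
  proof (rule nonpos_if_le_small_multiples)
    show "0 \<le> (norm d)\<^sup>2 / (2 * \<tau>)"
      using \<open>0 < \<tau>\<close> by simp
    fix t :: real
    assume "0 < t" "t \<le> 1"
    define zt where "zt = p + t *\<^sub>R d"
    have zt_convex: "zt = (1 - t) *\<^sub>R p + t *\<^sub>R z"
      by (simp add: zt_def d_def algebra_simps)
    have "zt \<in> X"
      unfolding zt_convex using assms \<open>0 < t\<close> \<open>t \<le> 1\<close> by (simp add: convex_def)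
    with prox have "f p + (norm (p - c))\<^sup>2 / (2 * \<tau>) \<le> f zt + (norm (zt - c))\<^sup>2 / (2 * \<tau>)"
      by blast
    then have "f p \<le> f zt + ((norm (zt - c))\<^sup>2 - (norm (p - c))\<^sup>2) / (2 * \<tau>)"
      unfolding diff_divide_distrib by linarith
    also have "(norm (zt - c))\<^sup>2 - (norm (p - c))\<^sup>2 = 2 * t * inner (p - c) d + t\<^sup>2 * (norm d)\<^sup>2"
      unfolding zt_def power2_norm_eq_inner
      by (simp add: inner_add_left inner_add_right inner_diff_left inner_diff_right inner_commute
          algebra_simps power2_eq_square)
    finally have "f p \<le> f zt + (2 * t * inner (p - c) d + t\<^sup>2 * (norm d)\<^sup>2) / (2 * \<tau>)" .
    moreover have "f zt \<le> (1 - t) * f p + t * f z"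
      unfolding zt_convex using convex_onD[OF assms(1), of t p z] \<open>0 < t\<close> \<open>t \<le> 1\<close> by simp
    ultimately have "t * (f p - f z) \<le> (2 * t * inner (p - c) d + t\<^sup>2 * (norm d)\<^sup>2) / (2 * \<tau>)"
      by (simp add: algebra_simps)
    also have "\<dots> = t * (inner (p - c) d / \<tau> + t * ((norm d)\<^sup>2 / (2 * \<tau>)))"
      using \<open>0 < \<tau>\<close> by (simp add: field_simps power2_eq_square)
    finally show "f p - f z - inner (p - c) d / \<tau> \<le> t * ((norm d)\<^sup>2 / (2 * \<tau>))"
      using \<open>0 < t\<close> by (simp add: mult_le_cancel_left_pos)
  qed
  moreover have "inner ((1 / \<tau>) *\<^sub>R (c - p)) (z - p) = - inner (p - c) d / \<tau>"
    by (simp add: d_def inner_diff_left)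
  ultimately show ?thesis
    by simp
qed

lemma prox_step_monotone:
  fixes f :: "'a::real_inner \<Rightarrow> real"
  assumes "convex_on UNIV f" "convex X" "p \<in> X" "0 < \<tau>"
    and "\<forall>z\<in>X. f p + (norm (p - c))\<^sup>2 / (2 * \<tau>) \<le> f z + (norm (z - c))\<^sup>2 / (2 * \<tau>)"
    and "v \<in> subdiff_on f X q"
  shows "0 \<le> inner ((1 / \<tau>) *\<^sub>R (c - p) - v) (p - q)"
proof -
  have "q \<in> X" and "f q + inner v (p - q) \<le> f p"
    using assms(3,6) by (auto simp: subdiff_on_def)
  moreover have "f p + inner ((1 / \<tau>) *\<^sub>R (c - p)) (q - p) \<le> f q"
    using prox_variational_inequality[OF assms(1-5) \<open>q \<in> X\<close>] .
  moreover have "inner ((1 / \<tau>) *\<^sub>R (c - p)) (q - p) = - inner ((1 / \<tau>) *\<^sub>R (c - p)) (p - q)"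
    by (simp add: inner_diff_right)
  ultimately show ?thesis
    by (simp add: inner_diff_left)
qed

section \<open>Perturbed descent of real sequences\<close>

lemma robbins_siegmund_summable:
  fixes U w d e :: "nat \<Rightarrow> real"
  assumes "\<And>k. 0 \<le> U k" "\<And>k. 0 \<le> w k" "\<And>k. 0 \<le> d k" "\<And>k. 0 \<le> e k"
    and "summable d" "summable e"
    and step: "\<And>k. U (Suc k) \<le> (1 + d k) * U k + e k - w k"
  shows "summable w"
proof -
  have U_le: "U n \<le> exp (\<Sum>i<n. d i) * (U 0 + (\<Sum>i<n. e i))" for n
  proof (induction n)
    case (Suc n)
    have "1 \<le> exp (\<Sum>i<Suc n. d i)"
      using assms(3) by (simp add: sum_nonneg)
    then have "e n \<le> exp (\<Sum>i<Suc n. d i) * e n"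
      using assms(4)[of n] by (simp add: mult_le_cancel_right1)
    moreover have "(1 + d n) * U n \<le> exp (d n) * (exp (\<Sum>i<n. d i) * (U 0 + (\<Sum>i<n. e i)))"
      using Suc assms(1,3)[of n] by (intro mult_mono) (use exp_ge_add_one_self[of "d n"] in auto)
    ultimately show ?case
      using step[of n] assms(2)[of n] by (simp add: exp_add algebra_simps)
  qed simp
  define B where "B = exp (suminf d) * (U 0 + suminf e)"
  have "U n \<le> B" for n
  proof -
    have "exp (\<Sum>i<n. d i) * (U 0 + (\<Sum>i<n. e i)) \<le> B"
      unfolding B_def using assms
      by (intro mult_mono add_mono sum_le_suminf) (auto intro!: add_nonneg_nonneg sum_nonneg sum_le_suminf)
    then show ?thesis
      using U_le[of n] by linarith
  qed
  then have "w k \<le> (U k - U (Suc k)) + B * d k + e k" for k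
    using step[of k] mult_right_mono[of "U k" B "d k"] assms(3)[of k] by (simp add: algebra_simps)
  then have sum_w: "(\<Sum>k<n. w k) \<le> (\<Sum>k<n. U k - U (Suc k)) + B * (\<Sum>k<n. d k) + (\<Sum>k<n. e k)" for n
    by (simp add: sum_mono sum.distrib sum_distrib_left flip: sum.distrib)
  have partial_sums: "(\<Sum>k<n. w k) \<le> U 0 + B * suminf d + suminf e" for n
  proof -
    have "(\<Sum>k<n. d k) \<le> suminf d" "(\<Sum>k<n. e k) \<le> suminf e"
      using assms by (auto intro!: sum_le_suminf)
    moreover have "0 \<le> B"
      using \<open>U 0 \<le> B\<close> assms(1)[of 0] by linarith
    ultimately have "B * (\<Sum>k<n. d k) \<le> B * suminf d"
      by (simp add: mult_left_mono)
    then show ?thesis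
      using sum_w[of n] sum_lessThan_telescope'[of U n] assms(1)[of n] \<open>(\<Sum>k<n. e k) \<le> suminf e\<close>
      by linarith
  qed
  show ?thesis
    using partial_sums[of "Suc _"] by (intro bounded_imp_summable[OF assms(2)]) (simp add: lessThan_Suc_atMost)
qed

text \<open>\<open>V k\<close> and \<open>Z k\<close> are the energies of the current and of the next error, both measured in the
  metric of step \<open>k\<close>; \<open>w k\<close> is the energy of the step itself and \<open>\<psi> k * E k\<close> the cost of
  switching to the metric of step \<open>k + 1\<close>.\<close>

lemma summable_dissipation:
  fixes V Z w E \<psi> :: "nat \<Rightarrow> real"
  assumes descent: "\<And>k. Z k + w k \<le> V k"
    and drift: "\<And>k. V (Suc k) \<le> Z k + \<psi> k * E k"
    and "\<And>k. 0 \<le> \<psi> k" "summable \<psi>"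
    and Z_lower: "\<And>k. 0 < k \<Longrightarrow> - K \<le> Z k"
    and E_upper: "\<And>k. 0 < k \<Longrightarrow> E k \<le> \<alpha> * (Z k + K) + \<beta>" and "0 \<le> \<alpha>" "0 \<le> \<beta>"
    and w_nonneg: "\<And>k. 0 < k \<Longrightarrow> 0 \<le> w k"
  shows "summable w"
proof -
  have "summable (\<lambda>k. w (Suc k))"
  proof (rule robbins_siegmund_summable)
    show "0 \<le> V (Suc k) + K" for k
      using descent[of "Suc k"] Z_lower[of "Suc k"] w_nonneg[of "Suc k"] by simp
    show "summable (\<lambda>k. \<alpha> * \<psi> (Suc k))" "summable (\<lambda>k. \<beta> * \<psi> (Suc k))"
      using \<open>summable \<psi>\<close> by (simp_all add: summable_Suc_iff)
    show "V (Suc (Suc k)) + K \<le> (1 + \<alpha> * \<psi> (Suc k)) * (V (Suc k) + K) + \<beta> * \<psi> (Suc k) - w (Suc k)" for k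
    proof -
      have "\<psi> (Suc k) * E (Suc k) \<le> \<psi> (Suc k) * (\<alpha> * (Z (Suc k) + K) + \<beta>)"
        using E_upper[of "Suc k"] assms(3)[of "Suc k"] by (simp add: mult_left_mono)
      then have "V (Suc (Suc k)) + K \<le> (Z (Suc k) + K) + \<psi> (Suc k) * (\<alpha> * (Z (Suc k) + K) + \<beta>)"
        using drift[of "Suc k"] by linarith
      also have "\<dots> = (1 + \<alpha> * \<psi> (Suc k)) * (Z (Suc k) + K) + \<beta> * \<psi> (Suc k)"
        by (simp add: algebra_simps)
      also have "\<dots> \<le> (1 + \<alpha> * \<psi> (Suc k)) * (V (Suc k) + K - w (Suc k)) + \<beta> * \<psi> (Suc k)"
        using descent[of "Suc k"] assms(3)[of "Suc k"] \<open>0 \<le> \<alpha>\<close> by (intro add_right_mono mult_left_mono) auto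
      also have "\<dots> \<le> (1 + \<alpha> * \<psi> (Suc k)) * (V (Suc k) + K) + \<beta> * \<psi> (Suc k) - w (Suc k)"
        using w_nonneg[of "Suc k"] assms(3)[of "Suc k"] \<open>0 \<le> \<alpha>\<close> by (simp add: algebra_simps)
      finally show ?thesis .
    qed
  qed (use assms in auto)
  then show ?thesis
    by (simp add: summable_Suc_iff)
qed

lemma ge_mult_one_minus_sum_if_relative_decrease:
  fixes \<tau> \<phi> :: "nat \<Rightarrow> real"
  assumes "0 \<le> \<tau> N" "\<And>k. 0 \<le> \<phi> k" "\<And>k. \<tau> k * (1 - \<phi> k) \<le> \<tau> (Suc k)"
  shows "(\<Sum>i\<in>{N..<N + j}. \<phi> i) \<le> 1 \<Longrightarrow> \<tau> N * (1 - (\<Sum>i\<in>{N..<N + j}. \<phi> i)) \<le> \<tau> (N + j)"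
proof (induction j)
  case (Suc j)
  let ?S = "\<Sum>i\<in>{N..<N + j}. \<phi> i"
  have "0 \<le> ?S"
    using assms(2) by (simp add: sum_nonneg)
  with Suc.prems have "?S \<le> 1" "\<phi> (N + j) \<le> 1"
    using assms(2)[of "N + j"] by simp_all
  have "\<tau> N * (1 - (?S + \<phi> (N + j))) \<le> \<tau> N * ((1 - ?S) * (1 - \<phi> (N + j)))"
    using assms(1,2) \<open>0 \<le> ?S\<close> by (intro mult_left_mono) (simp_all add: algebra_simps)
  also have "\<dots> \<le> \<tau> (N + j) * (1 - \<phi> (N + j))"
    using Suc.IH[OF \<open>?S \<le> 1\<close>] \<open>\<phi> (N + j) \<le> 1\<close> by (simp add: mult.assoc[symmetric] mult_right_mono)
  also have "\<dots> \<le> \<tau> (N + Suc j)"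
    using assms(3)[of "N + j"] by simp
  finally show ?case
    by simp
qed simp

lemma uniformly_positive_if_summable_relative_decrease:
  fixes \<tau> \<phi> :: "nat \<Rightarrow> real"
  assumes pos: "\<And>k. 0 < \<tau> k" and "\<And>k. 0 \<le> \<phi> k" "summable \<phi>"
    and relative_decrease: "\<And>k. (\<tau> k - \<tau> (Suc k)) / \<tau> k \<le> \<phi> k"
  shows "\<exists>m>0. \<forall>k. m \<le> \<tau> k"
proof -
  have decrease: "\<tau> k * (1 - \<phi> k) \<le> \<tau> (Suc k)" for k
    using relative_decrease[of k] pos[of k] by (simp add: divide_le_eq algebra_simps)
  obtain N where N: "\<And>m n. N \<le> m \<Longrightarrow> norm (\<Sum>i=m..n. \<phi> i) < 1 / 2"
    using summable_partial_sum_bound[OF \<open>summable \<phi>\<close>, of "1 / 2"] by auto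
  have tail_le: "(\<Sum>i\<in>{N..<N + j}. \<phi> i) \<le> 1 / 2" for j
  proof -
    have "(\<Sum>i\<in>{N..<N + j}. \<phi> i) \<le> (\<Sum>i=N..N + j. \<phi> i)"
      by (rule sum_mono2) (auto simp: assms(2))
    also have "\<dots> \<le> norm (\<Sum>i=N..N + j. \<phi> i)"
      by simp
    finally show ?thesis
      using N[of N "N + j"] by simp
  qed
  define m where "m = min (\<tau> N / 2) (Min (\<tau> ` {..N}))"
  have "m \<le> \<tau> k" for k
  proof (cases "N \<le> k")
    case True
    then obtain j where "k = N + j"
      using le_Suc_ex by blast
    moreover have "\<tau> N / 2 \<le> \<tau> N * (1 - (\<Sum>i\<in>{N..<N + j}. \<phi> i))"
      using tail_le[of j] pos[of N] by (simp add: mult_left_mono)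
    moreover have "\<tau> N * (1 - (\<Sum>i\<in>{N..<N + j}. \<phi> i)) \<le> \<tau> (N + j)"
      using pos[of N] assms(2) decrease tail_le[of j]
      by (intro ge_mult_one_minus_sum_if_relative_decrease) auto
    ultimately show ?thesis
      by (simp add: m_def)
  next
    case False
    then have "Min (\<tau> ` {..N}) \<le> \<tau> k"
      by (intro Min_le) auto
    then show ?thesis
      by (simp add: m_def)
  qed
  moreover have "0 < m"
    using pos by (simp add: m_def Min_gr_iff)
  ultimately show ?thesis
    by blast
qed

lemma inverse_increment_le:
  fixes a a' m \<phi> :: real
  assumes "0 < a" "0 < m" "m \<le> a'" "0 \<le> \<phi>" "(a - a') / a \<le> \<phi>"
  shows "1 / a' - 1 / a \<le> \<phi> / m"
proof -
  have "1 / a' - 1 / a = ((a - a') / a) / a'"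
    using assms by (simp add: field_simps)
  also have "\<dots> \<le> \<phi> / a'"
    using assms by (intro divide_right_mono) auto
  also have "\<dots> \<le> \<phi> / m"
    using assms by (intro divide_left_mono) auto
  finally show ?thesis .
qed

locale pdhg =
  fixes A :: "real^'n^'m"
    and f :: "real^'n \<Rightarrow> real" and g :: "real^'m \<Rightarrow> real"
    and X :: "(real^'n) set" and Y :: "(real^'m) set"
    and x :: "nat \<Rightarrow> real^'n" and y :: "nat \<Rightarrow> real^'m"
    and \<tau> \<sigma> :: "nat \<Rightarrow> real"
    and xs :: "real^'n" and ys :: "real^'m"
  assumes f_cvx: "convex_on UNIV f" and g_cvx: "convex_on UNIV g"
    and X_cvx: "convex X" and Y_cvx: "convex Y"
    and saddle_x: "- (transpose A *v ys) \<in> subdiff_on f X xs"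
    and saddle_y: "A *v xs \<in> subdiff_on g Y ys"
    and tau_pos: "\<And>k. 0 < \<tau> k" and sigma_pos: "\<And>k. 0 < \<sigma> k"
    and x_step: "\<forall>k. x (Suc k) \<in> X \<and>
        (\<forall>z\<in>X. f (x (Suc k)) + (norm (x (Suc k) - (x k - \<tau> k *\<^sub>R (transpose A *v y k))))\<^sup>2 / (2 * \<tau> k)
              \<le> f z + (norm (z - (x k - \<tau> k *\<^sub>R (transpose A *v y k))))\<^sup>2 / (2 * \<tau> k))"
    and y_step: "\<forall>k. y (Suc k) \<in> Y \<and>
        (\<forall>w\<in>Y. g (y (Suc k)) + (norm (y (Suc k) - (y k + \<sigma> k *\<^sub>R (A *v (2 *\<^sub>R x (Suc k) - x k)))))\<^sup>2 / (2 * \<sigma> k)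
              \<le> g w + (norm (w - (y k + \<sigma> k *\<^sub>R (A *v (2 *\<^sub>R x (Suc k) - x k)))))\<^sup>2 / (2 * \<sigma> k))"
begin

abbreviation M_form :: "nat \<Rightarrow> real^'n \<Rightarrow> real^'m \<Rightarrow> real" where
  "M_form k \<equiv> M_quad (\<tau> k) (\<sigma> k) A"

abbreviation H_form :: "nat \<Rightarrow> real^'n \<Rightarrow> real^'m \<Rightarrow> real" where
  "H_form k \<equiv> H_quad (\<tau> k) (\<sigma> k)"

lemma fejer_inequality:
  "M_form k (x (Suc k) - xs) (y (Suc k) - ys) + M_form k (x (Suc k) - x k) (y (Suc k) - y k)
     \<le> M_form k (x k - xs) (y k - ys)"
proof -
  have "0 \<le> inner ((1 / \<tau> k) *\<^sub>R ((x k - \<tau> k *\<^sub>R (transpose A *v y k)) - x (Suc k)) - - (transpose A *v ys))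
                  (x (Suc k) - xs)"
    using x_step by (intro prox_step_monotone[OF f_cvx X_cvx _ tau_pos _ saddle_x]) auto
  moreover have "(1 / \<tau> k) *\<^sub>R ((x k - \<tau> k *\<^sub>R (transpose A *v y k)) - x (Suc k)) - - (transpose A *v ys)
      = (1 / \<tau> k) *\<^sub>R ((x k - xs) - (x (Suc k) - xs)) - transpose A *v (y k - ys)"
    using tau_pos[of k] by (simp add: algebra_simps matrix_vector_mult_diff_distrib)
  moreover have "0 \<le> inner ((1 / \<sigma> k) *\<^sub>R ((y k + \<sigma> k *\<^sub>R (A *v (2 *\<^sub>R x (Suc k) - x k))) - y (Suc k)) - A *v xs)
                  (y (Suc k) - ys)"
    using y_step by (intro prox_step_monotone[OF g_cvx Y_cvx _ sigma_pos _ saddle_y]) auto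
  moreover have "(1 / \<sigma> k) *\<^sub>R ((y k + \<sigma> k *\<^sub>R (A *v (2 *\<^sub>R x (Suc k) - x k))) - y (Suc k)) - A *v xs
      = (1 / \<sigma> k) *\<^sub>R ((y k - ys) - (y (Suc k) - ys)) + A *v (2 *\<^sub>R (x (Suc k) - xs) - (x k - xs))"
    using sigma_pos[of k] by (simp add: algebra_simps matrix_vector_mult_diff_distrib scaleR_2)
  ultimately show ?thesis
    using M_quad_descent[of "\<tau> k" "x k - xs" "x (Suc k) - xs" A "y k - ys" "\<sigma> k" "y (Suc k) - ys"]
    by simp
qed

lemma summable_increments_if_coercive:
  assumes "\<And>k. \<tau> k \<le> T" "\<And>k. \<sigma> k \<le> T"
    and "\<And>k. 0 \<le> \<psi> k" "summable \<psi>"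
    and "\<And>k. 1 / \<tau> (Suc k) - 1 / \<tau> k \<le> \<psi> k" "\<And>k. 1 / \<sigma> (Suc k) - 1 / \<sigma> k \<le> \<psi> k"
    and "0 \<le> \<alpha>" "0 \<le> \<beta>"
    and coercive: "\<And>k j. 0 < k \<Longrightarrow> 0 < j \<Longrightarrow> - K \<le> M_form k (x j - xs) (y j - ys) \<and>
       (norm (x j - xs))\<^sup>2 + (norm (y j - ys))\<^sup>2 \<le> \<alpha> * (M_form k (x j - xs) (y j - ys) + K) + \<beta>"
    and "0 < c"
    and strong: "\<And>k. 0 < k \<Longrightarrow> c * H_form k (x (Suc k) - x k) (y (Suc k) - y k)
                                   \<le> M_form k (x (Suc k) - x k) (y (Suc k) - y k)"
  shows "summable (\<lambda>k. (norm (x (Suc k) - x k))\<^sup>2 + (norm (y (Suc k) - y k))\<^sup>2)"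
proof -
  define w where "w k = M_form k (x (Suc k) - x k) (y (Suc k) - y k)" for k
  have w_ge: "c * H_form k (x (Suc k) - x k) (y (Suc k) - y k) \<le> w k" if "0 < k" for k
    using strong[OF that] by (simp add: w_def)
  have "summable w"
  proof (rule summable_dissipation[where K = K and \<alpha> = \<alpha> and \<beta> = \<beta>])
    show "M_form k (x (Suc k) - xs) (y (Suc k) - ys) + w k \<le> M_form k (x k - xs) (y k - ys)" for k
      unfolding w_def by (rule fejer_inequality)
    show "M_form (Suc k) (x (Suc k) - xs) (y (Suc k) - ys) \<le> M_form k (x (Suc k) - xs) (y (Suc k) - ys)
        + \<psi> k * ((norm (x (Suc k) - xs))\<^sup>2 + (norm (y (Suc k) - ys))\<^sup>2)" for k
      using assms(5,6) by (rule M_quad_change_stepsizes)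
    show "0 \<le> w k" if "0 < k" for k
      using w_ge[OF that] H_quad_nonneg[OF tau_pos sigma_pos] \<open>0 < c\<close>
      by (meson order_trans mult_nonneg_nonneg less_imp_le)
  qed (use assms coercive in auto)
  show ?thesis
  proof (rule summable_comparison_test'[where N = 1])
    show "summable (\<lambda>k. T / c * w k)"
      using \<open>summable w\<close> by (rule summable_mult)
    fix k :: nat
    assume "1 \<le> k"
    have "(norm (x (Suc k) - x k))\<^sup>2 + (norm (y (Suc k) - y k))\<^sup>2 \<le> T * H_form k (x (Suc k) - x k) (y (Suc k) - y k)"
      using assms(1,2) tau_pos sigma_pos by (intro norms_sq_le_H_quad)
    also have "\<dots> \<le> T / c * w k"
      using w_ge[of k] \<open>1 \<le> k\<close> \<open>0 < c\<close> tau_pos[of k] assms(1)[of k]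
      by (simp add: field_simps mult_left_mono)
    finally show "norm ((norm (x (Suc k) - x k))\<^sup>2 + (norm (y (Suc k) - y k))\<^sup>2) \<le> T / c * w k"
      by simp
  qed
qed

lemma summable_increments_if_stepsize_product_lt:
  assumes "\<And>k. \<tau> k \<le> T" "\<And>k. \<sigma> k \<le> T"
    and "\<And>k. 0 \<le> \<psi> k" "summable \<psi>"
    and "\<And>k. 1 / \<tau> (Suc k) - 1 / \<tau> k \<le> \<psi> k" "\<And>k. 1 / \<sigma> (Suc k) - 1 / \<sigma> k \<le> \<psi> k"
    and "L * spec_radius (transpose A ** A) < 1" "\<forall>k>0. \<tau> k * \<sigma> k < L"
  shows "summable (\<lambda>k. (norm (x (Suc k) - x k))\<^sup>2 + (norm (y (Suc k) - y k))\<^sup>2)"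
proof -
  define \<delta> where "\<delta> = 1 - sqrt (L * spec_radius (transpose A ** A))"
  have "0 < \<delta>"
    using assms(7) by (simp add: \<delta>_def)
  have M_ge: "\<delta> * H_form k u v \<le> M_form k u v" if "0 < k" for k u v
    unfolding \<delta>_def using assms(7,8) that tau_pos sigma_pos
    by (intro M_quad_ge_H_quad_if_stepsize_product_lt) auto
  have "0 \<le> T"
    using tau_pos[of 0] assms(1)[of 0] by linarith
  have coercive: "- 0 \<le> M_form k u v \<and> (norm u)\<^sup>2 + (norm v)\<^sup>2 \<le> T / \<delta> * (M_form k u v + 0) + 0"
    if "0 < k" for k u v
  proof -
    have "0 \<le> \<delta> * H_form k u v"
      using \<open>0 < \<delta>\<close> H_quad_nonneg[OF tau_pos sigma_pos, of k k u v] by simp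
    moreover have "(norm u)\<^sup>2 + (norm v)\<^sup>2 \<le> T * H_form k u v"
      using assms(1,2) tau_pos sigma_pos by (intro norms_sq_le_H_quad)
    moreover have "H_form k u v \<le> M_form k u v / \<delta>"
      using M_ge[OF that, of u v] \<open>0 < \<delta>\<close> by (simp add: pos_le_divide_eq mult.commute)
    then have "T * H_form k u v \<le> T / \<delta> * M_form k u v"
      using \<open>0 \<le> T\<close> by (metis mult_left_mono times_divide_eq_left times_divide_eq_right)
    ultimately show ?thesis
      using M_ge[OF that, of u v] by simp
  qed
  show ?thesis
    by (rule summable_increments_if_coercive[where K = 0 and \<alpha> = "T / \<delta>" and \<beta> = 0 and c = \<delta>])
      (use assms coercive M_ge \<open>0 < \<delta>\<close> \<open>0 \<le> T\<close> in auto)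
qed

lemma summable_increments_if_bounded_domain:
  assumes "\<And>k. \<tau> k \<le> T" "\<And>k. \<sigma> k \<le> T"
    and "\<And>k. 0 \<le> \<psi> k" "summable \<psi>"
    and "\<And>k. 1 / \<tau> (Suc k) - 1 / \<tau> k \<le> \<psi> k" "\<And>k. 1 / \<sigma> (Suc k) - 1 / \<sigma> k \<le> \<psi> k"
    and "bounded X \<or> bounded Y" and "0 < c"
    and "\<forall>k>0. c * H_form k (x (Suc k) - x k) (y (Suc k) - y k) \<le> M_form k (x (Suc k) - x k) (y (Suc k) - y k)"
  shows "summable (\<lambda>k. (norm (x (Suc k) - x k))\<^sup>2 + (norm (y (Suc k) - y k))\<^sup>2)"
proof -
  obtain N where N: "\<And>w. norm (A *v w) \<le> N * norm w" "\<And>w. norm (transpose A *v w) \<le> N * norm w"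
    using matrix_transpose_norm_bound by blast
  have iterates_in: "x j \<in> X" "y j \<in> Y" if "0 < j" for j
    using x_step y_step that by (metis Suc_pred)+
  obtain R where R: "\<And>j. 0 < j \<Longrightarrow> norm (x j - xs) \<le> R \<or> norm (y j - ys) \<le> R"
    using assms(7)
  proof
    assume "bounded X"
    then obtain R where "\<forall>z\<in>X. norm z \<le> R"
      unfolding bounded_iff by blast
    then have "norm (x j - xs) \<le> R + norm xs" if "0 < j" for j
      using iterates_in(1)[OF that] by (smt (verit) norm_triangle_ineq4)
    then show thesis
      using that by blast
  next
    assume "bounded Y"
    then obtain R where "\<forall>z\<in>Y. norm z \<le> R"
      unfolding bounded_iff by blast
    then have "norm (y j - ys) \<le> R + norm ys" if "0 < j" for j
      using iterates_in(2)[OF that] by (smt (verit) norm_triangle_ineq4)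
    then show thesis
      using that by blast
  qed
  have "0 \<le> T"
    using tau_pos[of 0] assms(1)[of 0] by linarith
  show ?thesis
    by (rule summable_increments_if_coercive[where K = "2 * T * N\<^sup>2 * R\<^sup>2" and \<alpha> = "2 * T" and \<beta> = "R\<^sup>2"])
      (use assms \<open>0 \<le> T\<close> M_quad_bounds_if_one_norm_le[OF tau_pos sigma_pos assms(1,2) N R] in auto)
qed

lemma summable_increments:
  assumes "\<And>k. \<tau> k \<le> T" "\<And>k. \<sigma> k \<le> T"
    and "\<And>k. 0 \<le> \<psi> k" "summable \<psi>"
    and "\<And>k. 1 / \<tau> (Suc k) - 1 / \<tau> k \<le> \<psi> k" "\<And>k. 1 / \<sigma> (Suc k) - 1 / \<sigma> k \<le> \<psi> k"
    and "(\<exists>L. L * spec_radius (transpose A ** A) < 1 \<and> (\<forall>k>0. \<tau> k * \<sigma> k < L))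
      \<or> ((bounded X \<or> bounded Y) \<and>
         (\<exists>c. 0 < c \<and> c < 1 \<and> (\<forall>k>0.
            M_form k (x (Suc k) - x k) (y (Suc k) - y k) \<ge> c * H_form k (x (Suc k) - x k) (y (Suc k) - y k))))"
  shows "summable (\<lambda>k. (norm (x (Suc k) - x k))\<^sup>2 + (norm (y (Suc k) - y k))\<^sup>2)"
  using assms(7)
proof
  assume "\<exists>L. L * spec_radius (transpose A ** A) < 1 \<and> (\<forall>k>0. \<tau> k * \<sigma> k < L)"
  then show ?thesis
    using summable_increments_if_stepsize_product_lt[OF assms(1-6)] by blast
next
  assume "(bounded X \<or> bounded Y) \<and> (\<exists>c. 0 < c \<and> c < 1 \<and> (\<forall>k>0.
            M_form k (x (Suc k) - x k) (y (Suc k) - y k) \<ge> c * H_form k (x (Suc k) - x k) (y (Suc k) - y k)))"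
  then show ?thesis
    using summable_increments_if_bounded_domain[OF assms(1-6)] by blast
qed

end

lemma residuals_tendsto_zero_if_summable_increments:
  fixes A :: "real^'n^'m" and x :: "nat \<Rightarrow> real^'n" and y :: "nat \<Rightarrow> real^'m"
  assumes "0 < m" "\<And>k. m \<le> \<tau> k" "\<And>k. m \<le> \<sigma> k"
    and "summable (\<lambda>k. (norm (x (Suc k) - x k))\<^sup>2 + (norm (y (Suc k) - y k))\<^sup>2)"
  shows "(\<lambda>k. (norm ((1 / \<tau> k) *\<^sub>R (x k - x (Suc k)) - transpose A *v (y k - y (Suc k))))\<^sup>2
             + (norm ((1 / \<sigma> k) *\<^sub>R (y k - y (Suc k)) - A *v (x k - x (Suc k))))\<^sup>2)
         \<longlonglongrightarrow> 0"
proof -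
  obtain N where N: "\<And>w. norm (A *v w) \<le> N * norm w" "\<And>w. norm (transpose A *v w) \<le> N * norm w"
    using matrix_transpose_norm_bound by blast
  define C where "C = 2 / m\<^sup>2 + 2 * N\<^sup>2"
  have "summable (\<lambda>k. C * ((norm (x (Suc k) - x k))\<^sup>2 + (norm (y (Suc k) - y k))\<^sup>2))"
    using assms(4) by (rule summable_mult)
  moreover have "norm ((norm ((1 / \<tau> k) *\<^sub>R (x k - x (Suc k)) - transpose A *v (y k - y (Suc k))))\<^sup>2
             + (norm ((1 / \<sigma> k) *\<^sub>R (y k - y (Suc k)) - A *v (x k - x (Suc k))))\<^sup>2)
      \<le> C * ((norm (x (Suc k) - x k))\<^sup>2 + (norm (y (Suc k) - y k))\<^sup>2)" for k
  proof -
    let ?a = "(norm (x (Suc k) - x k))\<^sup>2" and ?b = "(norm (y (Suc k) - y k))\<^sup>2"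
    have "(norm ((1 / \<tau> k) *\<^sub>R (x k - x (Suc k)) - transpose A *v (y k - y (Suc k))))\<^sup>2
        \<le> 2 * ?a / m\<^sup>2 + 2 * N\<^sup>2 * ?b"
      using residual_sq_le[OF assms(1,2) N(2), of k "x k - x (Suc k)" "y k - y (Suc k)"]
      by (simp only: norm_minus_commute)
    moreover have "(norm ((1 / \<sigma> k) *\<^sub>R (y k - y (Suc k)) - A *v (x k - x (Suc k))))\<^sup>2
        \<le> 2 * ?b / m\<^sup>2 + 2 * N\<^sup>2 * ?a"
      using residual_sq_le[OF assms(1,3) N(1), of k "y k - y (Suc k)" "x k - x (Suc k)"]
      by (simp only: norm_minus_commute)
    moreover have "2 * ?a / m\<^sup>2 + 2 * N\<^sup>2 * ?b + (2 * ?b / m\<^sup>2 + 2 * N\<^sup>2 * ?a) = C * (?a + ?b)"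
      by (simp add: C_def add_divide_distrib distrib_left distrib_right)
    ultimately show ?thesis
      by simp
  qed
  ultimately show ?thesis
    by (intro summable_LIMSEQ_zero) (rule summable_comparison_test')
qed

theorem mainTheorem6:
  fixes A :: "real^'n^'m"
    and f :: "real^'n \<Rightarrow> real" and g :: "real^'m \<Rightarrow> real"
    and X :: "(real^'n) set" and Y :: "(real^'m) set"
    and x :: "nat \<Rightarrow> real^'n" and y :: "nat \<Rightarrow> real^'m"
    and \<tau> \<sigma> :: "nat \<Rightarrow> real"
  assumes f_cvx: "convex_on UNIV f" and g_cvx: "convex_on UNIV g"
    and X_cvx: "convex X" and Y_cvx: "convex Y"
    and feasible: "\<exists>xs ys. - (transpose A *v ys) \<in> subdiff_on f X xs
                          \<and> A *v xs \<in> subdiff_on g Y ys"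
    and tau_pos: "\<forall>k. \<tau> k > 0" and sigma_pos: "\<forall>k. \<sigma> k > 0"
    and x_step: "\<forall>k. x (Suc k) \<in> X \<and>
        (\<forall>z\<in>X. f (x (Suc k)) + (norm (x (Suc k) - (x k - \<tau> k *\<^sub>R (transpose A *v y k))))\<^sup>2 / (2 * \<tau> k)
              \<le> f z + (norm (z - (x k - \<tau> k *\<^sub>R (transpose A *v y k))))\<^sup>2 / (2 * \<tau> k))"
    and y_step: "\<forall>k. y (Suc k) \<in> Y \<and>
        (\<forall>w\<in>Y. g (y (Suc k)) + (norm (y (Suc k) - (y k + \<sigma> k *\<^sub>R (A *v (2 *\<^sub>R x (Suc k) - x k)))))\<^sup>2 / (2 * \<sigma> k)
              \<le> g w + (norm (w - (y k + \<sigma> k *\<^sub>R (A *v (2 *\<^sub>R x (Suc k) - x k)))))\<^sup>2 / (2 * \<sigma> k))"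
    and condA: "bounded (range \<tau>) \<and> bounded (range \<sigma>)"
    and condB: "\<exists>C. summable (\<lambda>k. max (max ((\<tau> k - \<tau> (Suc k)) / \<tau> k) ((\<sigma> k - \<sigma> (Suc k)) / \<sigma> k)) 0)
                  \<and> (\<Sum>k. max (max ((\<tau> k - \<tau> (Suc k)) / \<tau> k) ((\<sigma> k - \<sigma> (Suc k)) / \<sigma> k)) 0) < C"
    and condC: "(\<exists>L. L * spec_radius (transpose A ** A) < 1 \<and> (\<forall>k>0. \<tau> k * \<sigma> k < L))
              \<or> ((bounded X \<or> bounded Y) \<and>
                 (\<exists>c. 0 < c \<and> c < 1 \<and> (\<forall>k>0.
                    M_quad (\<tau> k) (\<sigma> k) A (x (Suc k) - x k) (y (Suc k) - y k)
                    \<ge> c * H_quad (\<tau> k) (\<sigma> k) (x (Suc k) - x k) (y (Suc k) - y k))))"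
  shows "(\<lambda>k. (norm ((1 / \<tau> k) *\<^sub>R (x k - x (Suc k)) - transpose A *v (y k - y (Suc k))))\<^sup>2
             + (norm ((1 / \<sigma> k) *\<^sub>R (y k - y (Suc k)) - A *v (x k - x (Suc k))))\<^sup>2)
         \<longlonglongrightarrow> 0"
proof -
  obtain xs ys where "- (transpose A *v ys) \<in> subdiff_on f X xs" "A *v xs \<in> subdiff_on g Y ys"
    using feasible by blast
  then interpret pdhg A f g X Y x y \<tau> \<sigma> xs ys
    using assms by unfold_locales auto
  define \<phi> where "\<phi> = (\<lambda>k. max (max ((\<tau> k - \<tau> (Suc k)) / \<tau> k) ((\<sigma> k - \<sigma> (Suc k)) / \<sigma> k)) 0)"
  have \<phi>: "0 \<le> \<phi> k" "(\<tau> k - \<tau> (Suc k)) / \<tau> k \<le> \<phi> k" "(\<sigma> k - \<sigma> (Suc k)) / \<sigma> k \<le> \<phi> k" for k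
    by (simp_all add: \<phi>_def)
  have "summable \<phi>"
    using condB by (auto simp: \<phi>_def)
  obtain m\<^sub>\<tau> m\<^sub>\<sigma> where "0 < m\<^sub>\<tau>" "\<forall>k. m\<^sub>\<tau> \<le> \<tau> k" "0 < m\<^sub>\<sigma>" "\<forall>k. m\<^sub>\<sigma> \<le> \<sigma> k"
    using uniformly_positive_if_summable_relative_decrease[OF tau_pos \<phi>(1) \<open>summable \<phi>\<close> \<phi>(2)]
      uniformly_positive_if_summable_relative_decrease[OF sigma_pos \<phi>(1) \<open>summable \<phi>\<close> \<phi>(3)] by blast
  define m where "m = min m\<^sub>\<tau> m\<^sub>\<sigma>"
  then have m: "0 < m" "\<And>k. m \<le> \<tau> k" "\<And>k. m \<le> \<sigma> k"
    using \<open>0 < m\<^sub>\<tau>\<close> \<open>\<forall>k. m\<^sub>\<tau> \<le> \<tau> k\<close> \<open>0 < m\<^sub>\<sigma>\<close> \<open>\<forall>k. m\<^sub>\<sigma> \<le> \<sigma> k\<close> by (auto simp: min.coboundedI1 min.coboundedI2)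
  obtain T\<^sub>\<tau> T\<^sub>\<sigma> where "\<forall>t\<in>range \<tau>. norm t \<le> T\<^sub>\<tau>" "\<forall>s\<in>range \<sigma>. norm s \<le> T\<^sub>\<sigma>"
    using condA unfolding bounded_iff by blast
  then have T: "\<tau> k \<le> max T\<^sub>\<tau> T\<^sub>\<sigma>" "\<sigma> k \<le> max T\<^sub>\<tau> T\<^sub>\<sigma>" for k
    by (simp_all add: abs_le_iff le_max_iff_disj)
  have \<psi>: "0 \<le> \<phi> k / m" "1 / \<tau> (Suc k) - 1 / \<tau> k \<le> \<phi> k / m" "1 / \<sigma> (Suc k) - 1 / \<sigma> k \<le> \<phi> k / m" for k
    using \<phi>[of k] m tau_pos[of k] sigma_pos[of k] by (auto intro!: inverse_increment_le)
  have "summable (\<lambda>k. \<phi> k / m)"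
    using \<open>summable \<phi>\<close> by (rule summable_divide)
  then have "summable (\<lambda>k. (norm (x (Suc k) - x k))\<^sup>2 + (norm (y (Suc k) - y k))\<^sup>2)"
    by (rule summable_increments[OF T \<psi>(1) _ \<psi>(2,3) condC])
  then show ?thesis
    using residuals_tendsto_zero_if_summable_increments m by blast
qed

end
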